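(* Let $f:\Sigma\to\mathbb{S}^4_1$ be a non-isotropic conformally immersed marginally trapped surface with non-zero mean curvature vector. Then the following are equivalent: (i) the quartic differential $Q=\langle f_{zz},f_{zz}\rangle dz^4$ is holomorphic; (ii) the quadratic differential $\delta=h(\xi_1-\xi_2)dz^2$ is holomorphic; (iii) $f$ has parallel mean curvature vector, $\nabla^\perp\mathbf H=0$.
   Context: $\mathbb{R}^5_1$ is $\mathbb{R}^5$ with $\langle x,y\rangle=x_0y_0+x_1y_1+x_2y_2+x_3y_3-x_4y_4$ (complex-bilinearly extended), $\mathbb{S}^4_1=\{\langle x,x\rangle=1\}$, future pointing means $\langle X,e_4\rangle<0$. $f$ conformal spacelike immersion with $\langle f_z,f_{\bar z}\rangle=e^{2u}$; positively oriented orthonormal normal frame $\{N_1,N_2\}$: $\langle N_1,N_1\rangle=1,\langle N_2,N_2\rangle=-1,\langle N_1,N_2\rangle=0$, $N_2$ future pointing, orientation of $\nu(f)$; $\xi_1=\langle f_{zz},N_1\rangle$, $\xi_2=-\langle f_{zz},N_2\rangle$ (so $Q=(\xi_1^2-\xi_2^2)dz^4$). $\mathbf H$: $f_{z\bar z}=-e^{2u}f+e^{2u}\mathbf H$; $\nabla^\perp$ normal connection; marginally trapped: $\langle\mathbf H,\mathbf H\rangle=0$, orientation chosen so $\mathbf H=h(N_1+N_2)$. Non-isotropic: $Q$ vanishes nowhere. *)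

theory Defs
  imports "HOL-Analysis.Analysis"
begin

text \<open>Lorentzian space R^5_1: vectors are real^5 (indices 0..4), the last index 4 is timelike.\<close>

definition lor :: "real^5 \<Rightarrow> real^5 \<Rightarrow> real" where
  "lor x y = (\<Sum>i\<in>UNIV. (if i = 4 then -1 else 1) * x$i * y$i)"

definition lorC :: "complex^5 \<Rightarrow> complex^5 \<Rightarrow> complex" where
  "lorC x y = (\<Sum>i\<in>UNIV. (if i = 4 then -1 else 1) * x$i * y$i)"

definition cvec :: "real^5 \<Rightarrow> complex^5" where
  "cvec v = (\<chi> i. complex_of_real (v$i))"

definition pdx :: "(complex \<Rightarrow> 'a::real_normed_vector) \<Rightarrow> complex \<Rightarrow> 'a" where
  "pdx g z = frechet_derivative g (at z) 1"

definition pdy :: "(complex \<Rightarrow> 'a::real_normed_vector) \<Rightarrow> complex \<Rightarrow> 'a" where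
  "pdy g z = frechet_derivative g (at z) \<i>"

fun Ck :: "nat \<Rightarrow> complex set \<Rightarrow> (complex \<Rightarrow> 'a::real_normed_vector) \<Rightarrow> bool" where
  "Ck 0 U g = continuous_on U g"
| "Ck (Suc n) U g = (g differentiable_on U \<and> Ck n U (pdx g) \<and> Ck n U (pdy g))"

definition smooth_on :: "complex set \<Rightarrow> (complex \<Rightarrow> 'a::real_normed_vector) \<Rightarrow> bool" where
  "smooth_on U g = (\<forall>n. Ck n U g)"

definition Dz :: "(complex \<Rightarrow> complex^5) \<Rightarrow> complex \<Rightarrow> complex^5" where
  "Dz G z = (\<chi> i. (pdx G z $ i - \<i> * pdy G z $ i) / 2)"

text \<open>Mean curvature vector H of f: f_{z zbar} = -e^{2u} f + e^{2u} H, where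
  e^{2u} = <f_z, f_zbar> = (<f_x,f_x> + <f_y,f_y>)/4 and f_{z zbar} = (f_xx + f_yy)/4.\<close>
definition meanH :: "(complex \<Rightarrow> real^5) \<Rightarrow> complex \<Rightarrow> real^5" where
  "meanH f z = f z + (1 / ((lor (pdx f z) (pdx f z) + lor (pdy f z) (pdy f z)) / 4))
                   *\<^sub>R ((1/4) *\<^sub>R (pdx (pdx f) z + pdy (pdy f) z))"

text \<open>Orthogonal projection onto the normal space spanned by N1 (<N1,N1>=1), N2 (<N2,N2>=-1).\<close>
definition normal_proj :: "real^5 \<Rightarrow> real^5 \<Rightarrow> real^5 \<Rightarrow> real^5" where
  "normal_proj N1 N2 v = lor v N1 *\<^sub>R N1 - lor v N2 *\<^sub>R N2"

definition nabla_perp_x :: "(complex \<Rightarrow> real^5) \<Rightarrow> (complex \<Rightarrow> real^5) \<Rightarrow> (complex \<Rightarrow> real^5) \<Rightarrow> complex \<Rightarrow> real^5" where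
  "nabla_perp_x N1 N2 V z = normal_proj (N1 z) (N2 z) (pdx V z)"

definition nabla_perp_y :: "(complex \<Rightarrow> real^5) \<Rightarrow> (complex \<Rightarrow> real^5) \<Rightarrow> (complex \<Rightarrow> real^5) \<Rightarrow> complex \<Rightarrow> real^5" where
  "nabla_perp_y N1 N2 V z = normal_proj (N1 z) (N2 z) (pdy V z)"

end

theory Submission
  imports Defs
begin

text \<open>We complexify and use Wirtinger derivatives. In the frame f, f_z, f_zbar, N1, N2 the
  structure equations give the Gauss formula f_zz = (E_z / E) f_z + \<xi>1 N1 + \<xi>2 N2, where
  E = e^{2u}, and the definition of H gives f_{z zbar} = E (H - f). Differentiating once more,
  Q_zbar = 2 <f_{zz zbar}, f_zz> = 2 E <H_z, N1> (\<xi>1 - \<xi>2) and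
  \<delta>_zbar = <H_zbar, N1> (\<xi>1 - \<xi>2); here we use that H = h (N1 + N2) is null, so that
  <dH, N2> = - <dH, N1>. Since Q = (\<xi>1 + \<xi>2) (\<xi>1 - \<xi>2) vanishes nowhere, either
  differential is holomorphic iff <dH, N1> = 0, i.e. iff the normal part of dH vanishes.\<close>

section \<open>Partial derivatives in the plane\<close>

lemma frechet_derivative_cong_open:
  assumes "open U" "z \<in> U" "\<And>w. w \<in> U \<Longrightarrow> G w = G' w"
  shows "frechet_derivative G (at z) = frechet_derivative G' (at z)"
proof -
  have "(G has_derivative D) (at z) \<longleftrightarrow> (G' has_derivative D) (at z)" for D
    using has_derivative_transform_within_open[OF _ assms(1,2), of G D UNIV G']
      has_derivative_transform_within_open[OF _ assms(1,2), of G' D UNIV G] assms(3)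
    by (metis (no_types, lifting))
  then show ?thesis
    unfolding frechet_derivative_def by simp
qed

lemma pdx_pdy_cong_open:
  assumes "open U" "z \<in> U" "\<And>w. w \<in> U \<Longrightarrow> G w = G' w"
  shows "pdx G z = pdx G' z" "pdy G z = pdy G' z"
  using frechet_derivative_cong_open[OF assms] by (simp_all add: pdx_def pdy_def)

lemma pdx_pdy_if_has_derivative:
  assumes "(G has_derivative D) (at z)"
  shows "pdx G z = D 1" "pdy G z = D \<i>"
  unfolding pdx_def pdy_def using frechet_derivative_at[OF assms] by simp_all

lemma has_derivative_pdx_pdy:
  assumes "G differentiable (at z)"
  shows "(G has_derivative (\<lambda>v. Re v *\<^sub>R pdx G z + Im v *\<^sub>R pdy G z)) (at z)"
proof -
  let ?D = "frechet_derivative G (at z)"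
  have "?D v = Re v *\<^sub>R ?D 1 + Im v *\<^sub>R ?D \<i>" for v
  proof -
    have "v = Re v *\<^sub>R 1 + Im v *\<^sub>R \<i>"
      by (simp add: complex_eq_iff)
    then have "?D v = ?D (Re v *\<^sub>R 1 + Im v *\<^sub>R \<i>)"
      by metis
    also have "\<dots> = Re v *\<^sub>R ?D 1 + Im v *\<^sub>R ?D \<i>"
      using linear_frechet_derivative[OF assms] by (simp add: linear_add linear_scale)
    finally show ?thesis .
  qed
  then have "?D = (\<lambda>v. Re v *\<^sub>R pdx G z + Im v *\<^sub>R pdy G z)"
    unfolding pdx_def pdy_def by (rule ext)
  with frechet_derivative_works assms show ?thesis by metis
qed

lemma pdx_pdy_bounded_linear:
  assumes "bounded_linear L" "A differentiable (at z)"
  shows "pdx (\<lambda>w. L (A w)) z = L (pdx A z)" "pdy (\<lambda>w. L (A w)) z = L (pdy A z)"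
  using pdx_pdy_if_has_derivative[OF bounded_linear.has_derivative[OF assms(1)
        has_derivative_pdx_pdy[OF assms(2)]]]
  by simp_all

lemma pdx_pdy_bounded_bilinear:
  assumes "bounded_bilinear B" "A differentiable (at z)" "C differentiable (at z)"
  shows "pdx (\<lambda>w. B (A w) (C w)) z = B (pdx A z) (C z) + B (A z) (pdx C z)"
    and "pdy (\<lambda>w. B (A w) (C w)) z = B (pdy A z) (C z) + B (A z) (pdy C z)"
  using pdx_pdy_if_has_derivative[OF bounded_bilinear.FDERIV[OF assms(1)
        has_derivative_pdx_pdy[OF assms(2)] has_derivative_pdx_pdy[OF assms(3)]]]
  by (simp_all add: add.commute)

lemma differentiable_bounded_bilinear:
  "bounded_bilinear B \<Longrightarrow> A differentiable (at z) \<Longrightarrow> C differentiable (at z) \<Longrightarrow>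
    (\<lambda>w. B (A w) (C w)) differentiable (at z)"
  unfolding differentiable_def using bounded_bilinear.FDERIV by blast

lemma pdx_pdy_add:
  assumes "A differentiable (at z)" "C differentiable (at z)"
  shows "pdx (\<lambda>w. A w + C w) z = pdx A z + pdx C z"
    and "pdy (\<lambda>w. A w + C w) z = pdy A z + pdy C z"
  using pdx_pdy_if_has_derivative[OF has_derivative_add[OF
        has_derivative_pdx_pdy[OF assms(1)] has_derivative_pdx_pdy[OF assms(2)]]]
  by simp_all

lemma pdx_pdy_diff:
  assumes "A differentiable (at z)" "C differentiable (at z)"
  shows "pdx (\<lambda>w. A w - C w) z = pdx A z - pdx C z"
    and "pdy (\<lambda>w. A w - C w) z = pdy A z - pdy C z"
  using pdx_pdy_if_has_derivative[OF has_derivative_diff[OF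
        has_derivative_pdx_pdy[OF assms(1)] has_derivative_pdx_pdy[OF assms(2)]]]
  by simp_all

lemma Ck_differentiable_at:
  "open U \<Longrightarrow> Ck (Suc n) U g \<Longrightarrow> z \<in> U \<Longrightarrow> g differentiable (at z)"
  by (simp add: differentiable_on_eq_differentiable_at)

lemma Ck_cong_open:
  assumes "open U" "\<And>w. w \<in> U \<Longrightarrow> g w = g' w" "Ck n U g"
  shows "Ck n U g'"
  using assms(2,3)
proof (induction n arbitrary: g g')
  case 0
  then show ?case by (simp cong: continuous_on_cong)
next
  case (Suc n)
  have "g' differentiable (at w)" if w: "w \<in> U" for w
  proof -
    obtain D where "(g has_derivative D) (at w)"
      using Suc.prems(2) w by (auto simp: differentiable_on_eq_differentiable_at[OF assms(1)]
          differentiable_def)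
    then have "(g' has_derivative D) (at w)"
      by (rule has_derivative_transform_within_open[OF _ assms(1) w]) (use Suc.prems in auto)
    then show ?thesis unfolding differentiable_def by blast
  qed
  then have "g' differentiable_on U"
    by (simp add: differentiable_on_eq_differentiable_at[OF assms(1)])
  moreover have "Ck n U (pdx g')" "Ck n U (pdy g')"
    using Suc.IH[of "pdx g" "pdx g'"] Suc.IH[of "pdy g" "pdy g'"] Suc.prems
      pdx_pdy_cong_open[OF assms(1), of _ g g'] by simp_all
  ultimately show ?case by simp
qed

lemma Ck_add:
  assumes "open U"
  shows "Ck n U A \<Longrightarrow> Ck n U C \<Longrightarrow> Ck n U (\<lambda>w. A w + C w)"
proof (induction n arbitrary: A C)
  case 0
  then show ?case by (simp add: continuous_on_add)
next
  case (Suc n)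
  have diff: "A differentiable (at w)" "C differentiable (at w)" if "w \<in> U" for w
    using Ck_differentiable_at[OF assms] Suc.prems that by blast+
  have "Ck n U (pdx (\<lambda>w. A w + C w))"
    by (rule Ck_cong_open[OF assms _ Suc.IH[of "pdx A" "pdx C"]])
      (use Suc.prems in \<open>simp_all add: diff pdx_pdy_add\<close>)
  moreover have "Ck n U (pdy (\<lambda>w. A w + C w))"
    by (rule Ck_cong_open[OF assms _ Suc.IH[of "pdy A" "pdy C"]])
      (use Suc.prems in \<open>simp_all add: diff pdx_pdy_add\<close>)
  ultimately show ?case using Suc.prems by simp
qed

lemma Ck_bounded_linear:
  assumes "open U" "bounded_linear L"
  shows "Ck n U A \<Longrightarrow> Ck n U (\<lambda>w. L (A w))"
proof (induction n arbitrary: A)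
  case 0
  then show ?case using bounded_linear.continuous_on[OF assms(2)] by simp
next
  case (Suc n)
  have diff: "(\<lambda>w. L (A w)) differentiable_on U"
    using Suc.prems
    by (auto simp: differentiable_on_eq_differentiable_at[OF assms(1)]
        intro!: differentiable_compose[of L] bounded_linear_imp_differentiable[OF assms(2)])
  have dA: "A differentiable (at w)" if "w \<in> U" for w
    using Ck_differentiable_at[OF assms(1)] Suc.prems that by blast
  have "Ck n U (pdx (\<lambda>w. L (A w)))"
    by (rule Ck_cong_open[OF assms(1) _ Suc.IH[of "pdx A"]])
      (use Suc.prems in \<open>simp_all add: dA pdx_pdy_bounded_linear[OF assms(2)]\<close>)
  moreover have "Ck n U (pdy (\<lambda>w. L (A w)))"
    by (rule Ck_cong_open[OF assms(1) _ Suc.IH[of "pdy A"]])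
      (use Suc.prems in \<open>simp_all add: dA pdx_pdy_bounded_linear[OF assms(2)]\<close>)
  ultimately show ?case using diff by simp
qed

lemma smooth_on_Ck: "smooth_on U G \<Longrightarrow> Ck n U G"
  by (simp add: smooth_on_def)

lemma smooth_on_pdx: "smooth_on U G \<Longrightarrow> smooth_on U (pdx G)"
  and smooth_on_pdy: "smooth_on U G \<Longrightarrow> smooth_on U (pdy G)"
  unfolding smooth_on_def by (metis Ck.simps(2))+

lemma smooth_on_differentiable_at:
  "open U \<Longrightarrow> smooth_on U G \<Longrightarrow> z \<in> U \<Longrightarrow> G differentiable (at z)"
  unfolding smooth_on_def using Ck_differentiable_at by blast

lemma smooth_on_add:
  "open U \<Longrightarrow> smooth_on U A \<Longrightarrow> smooth_on U C \<Longrightarrow> smooth_on U (\<lambda>w. A w + C w)"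
  unfolding smooth_on_def using Ck_add by blast

lemma smooth_on_bounded_linear:
  "open U \<Longrightarrow> bounded_linear L \<Longrightarrow> smooth_on U A \<Longrightarrow> smooth_on U (\<lambda>w. L (A w))"
  unfolding smooth_on_def using Ck_bounded_linear by blast

section \<open>Symmetry of mixed partial derivatives\<close>

lemma has_real_derivative_along_line:
  fixes g :: "complex \<Rightarrow> real"
  assumes "g differentiable (at (c + of_real t * v))"
  shows "((\<lambda>s. g (c + of_real s * v)) has_real_derivative
           frechet_derivative g (at (c + of_real t * v)) v) (at t)"
proof -
  let ?D = "frechet_derivative g (at (c + of_real t * v))"
  have "((\<lambda>s. c + of_real s * v) has_derivative (\<lambda>s. of_real s * v)) (at t)"
    by (auto intro!: derivative_eq_intros)
  from has_derivative_compose[OF this frechet_derivative_works[THEN iffD1, OF assms]]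
  have "((\<lambda>s. g (c + of_real s * v)) has_derivative (\<lambda>s. ?D (s *\<^sub>R v))) (at t)"
    by (simp add: scaleR_conv_of_real)
  moreover have "?D (s *\<^sub>R v) = s * ?D v" for s
    using linear_frechet_derivative[OF assms] by (simp add: linear_scale)
  ultimately show ?thesis
    unfolding has_field_derivative_def by (simp add: mult.commute[of _ "?D v"])
qed

lemma mixed_partials_meet_in_square:
  fixes g :: "complex \<Rightarrow> real" and z :: complex
  defines "P \<equiv> \<lambda>s \<sigma>. z + of_real s + of_real \<sigma> * \<i>"
  assumes t: "t > 0"
    and diff: "\<And>s \<sigma>. s \<in> {0..t} \<Longrightarrow> \<sigma> \<in> {0..t} \<Longrightarrow>
      g differentiable (at (P s \<sigma>)) \<and> pdx g differentiable (at (P s \<sigma>))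
        \<and> pdy g differentiable (at (P s \<sigma>))"
  obtains s1 \<sigma>1 s2 \<sigma>2 where "s1 \<in> {0..t}" "\<sigma>1 \<in> {0..t}" "s2 \<in> {0..t}" "\<sigma>2 \<in> {0..t}"
    "pdy (pdx g) (P s1 \<sigma>1) = pdx (pdy g) (P s2 \<sigma>2)"
proof -
  have along_x: "((\<lambda>s. G (P s \<sigma>)) has_real_derivative pdx G (P s \<sigma>)) (at s)"
    if "G differentiable (at (P s \<sigma>))" for G s \<sigma>
    using has_real_derivative_along_line[of G "z + of_real \<sigma> * \<i>" s 1] that
    by (simp add: P_def pdx_def algebra_simps)
  have along_y: "((\<lambda>\<sigma>. G (P s \<sigma>)) has_real_derivative pdy G (P s \<sigma>)) (at \<sigma>)"
    if "G differentiable (at (P s \<sigma>))" for G s \<sigma>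
    using has_real_derivative_along_line[of G "z + of_real s" \<sigma> \<i>] that
    by (simp add: P_def pdy_def algebra_simps)
  have d1: "DERIV (\<lambda>s. g (P s t) - g (P s 0)) s :> pdx g (P s t) - pdx g (P s 0)"
    if "0 \<le> s" "s \<le> t" for s
    using diff that t by (intro DERIV_diff along_x) auto
  obtain s1 where s1: "0 < s1" "s1 < t"
    "g (P t t) - g (P t 0) - (g (P 0 t) - g (P 0 0)) = (t - 0) * (pdx g (P s1 t) - pdx g (P s1 0))"
    using MVT2[OF t d1] by blast
  have d2: "DERIV (\<lambda>\<sigma>. pdx g (P s1 \<sigma>)) \<sigma> :> pdy (pdx g) (P s1 \<sigma>)"
    if "0 \<le> \<sigma>" "\<sigma> \<le> t" for \<sigma>
    using diff that s1 by (intro along_y) auto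
  obtain \<sigma>1 where \<sigma>1: "0 < \<sigma>1" "\<sigma>1 < t"
    "pdx g (P s1 t) - pdx g (P s1 0) = (t - 0) * pdy (pdx g) (P s1 \<sigma>1)"
    using MVT2[OF t d2] by blast
  have d3: "DERIV (\<lambda>\<sigma>. g (P t \<sigma>) - g (P 0 \<sigma>)) \<sigma> :> pdy g (P t \<sigma>) - pdy g (P 0 \<sigma>)"
    if "0 \<le> \<sigma>" "\<sigma> \<le> t" for \<sigma>
    using diff that t by (intro DERIV_diff along_y) auto
  obtain \<sigma>2 where \<sigma>2: "0 < \<sigma>2" "\<sigma>2 < t"
    "g (P t t) - g (P 0 t) - (g (P t 0) - g (P 0 0)) = (t - 0) * (pdy g (P t \<sigma>2) - pdy g (P 0 \<sigma>2))"
    using MVT2[OF t d3] by blast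
  have d4: "DERIV (\<lambda>s. pdy g (P s \<sigma>2)) s :> pdx (pdy g) (P s \<sigma>2)"
    if "0 \<le> s" "s \<le> t" for s
    using diff that \<sigma>2 by (intro along_x) auto
  obtain s2 where s2: "0 < s2" "s2 < t"
    "pdy g (P t \<sigma>2) - pdy g (P 0 \<sigma>2) = (t - 0) * pdx (pdy g) (P s2 \<sigma>2)"
    using MVT2[OF t d4] by blast
  \<comment> \<open>Two applications of the mean value theorem in either order both compute the second
    difference of g over the square.\<close>
  have "t * (t * pdy (pdx g) (P s1 \<sigma>1)) = t * (t * pdx (pdy g) (P s2 \<sigma>2))"
    using s1(3) \<sigma>1(3) \<sigma>2(3) s2(3) by (simp add: algebra_simps)
  with t s1 \<sigma>1 s2 \<sigma>2 show ?thesis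
    by (intro that[of s1 \<sigma>1 s2 \<sigma>2]) auto
qed

lemma pdy_pdx_commute_real:
  fixes g :: "complex \<Rightarrow> real"
  assumes U: "open U" "z \<in> U" and g: "Ck 2 U g"
  shows "pdy (pdx g) z = pdx (pdy g) z"
proof (rule ccontr)
  define A B where "A = pdy (pdx g)" and "B = pdx (pdy g)"
  assume "pdy (pdx g) z \<noteq> pdx (pdy g) z"
  then have \<epsilon>: "\<bar>A z - B z\<bar> / 2 > 0" by (simp add: A_def B_def)
  have g2: "Ck (Suc (Suc 0)) U g" using g by (simp add: numeral_2_eq_2)
  then have diff: "g differentiable (at w) \<and> pdx g differentiable (at w) \<and> pdy g differentiable (at w)"
    if "w \<in> U" for w
    using that by (auto simp: differentiable_on_eq_differentiable_at[OF U(1)])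
  have "isCont A z" "isCont B z"
    using g2 U by (auto simp: A_def B_def continuous_on_eq_continuous_at)
  then obtain dA dB where dA: "dA > 0" "\<And>w. dist w z < dA \<Longrightarrow> dist (A w) (A z) < \<bar>A z - B z\<bar> / 2"
    and dB: "dB > 0" "\<And>w. dist w z < dB \<Longrightarrow> dist (B w) (B z) < \<bar>A z - B z\<bar> / 2"
    using \<epsilon> unfolding continuous_at_eps_delta by metis
  obtain r where r: "r > 0" "ball z r \<subseteq> U" using U open_contains_ball by blast
  define t where "t = min r (min dA dB) / 4"
  have t: "t > 0" using r dA dB by (simp add: t_def)
  have near: "dist (z + of_real s + of_real \<sigma> * \<i>) z < min r (min dA dB)"
    if "s \<in> {0..t}" "\<sigma> \<in> {0..t}" for s \<sigma>
  proof -
    have "dist (z + of_real s + of_real \<sigma> * \<i>) z = norm (of_real s + of_real \<sigma> * \<i>)"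
      by (simp add: dist_norm)
    also have "\<dots> \<le> norm (of_real s :: complex) + norm (of_real \<sigma> * \<i>)"
      by (rule norm_triangle_ineq)
    also have "\<dots> \<le> 2 * t" using that by (simp add: norm_mult)
    finally show ?thesis using t by (simp add: t_def)
  qed
  then have "z + of_real s + of_real \<sigma> * \<i> \<in> U" if "s \<in> {0..t}" "\<sigma> \<in> {0..t}" for s \<sigma>
    using r that by (auto simp: dist_commute subset_iff)
  then obtain w1 w2 where w: "dist w1 z < dA" "dist w2 z < dB" "A w1 = B w2"
    using mixed_partials_meet_in_square[of t g z] t diff near unfolding A_def B_def
    by (metis (no_types, lifting) min_less_iff_conj)
  have "\<bar>A z - B z\<bar> \<le> \<bar>A z - A w1\<bar> + \<bar>B w2 - B z\<bar>"
    using w(3) by linarith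
  also have "\<dots> < \<bar>A z - B z\<bar>"
    using dA(2)[OF w(1)] dB(2)[OF w(2)] by (simp add: dist_real_def abs_minus_commute)
  finally show False by simp
qed

lemma pdy_pdx_commute:
  fixes G :: "complex \<Rightarrow> 'a::euclidean_space"
  assumes U: "open U" "z \<in> U" and G: "Ck 2 U G"
  shows "pdy (pdx G) z = pdx (pdy G) z"
proof (rule euclidean_eqI)
  fix b :: 'a
  have G2: "Ck (Suc (Suc 0)) U G" using G by (simp add: numeral_2_eq_2)
  then have dG: "G differentiable (at w)" "pdx G differentiable (at w)" "pdy G differentiable (at w)"
    if "w \<in> U" for w
    using that by (auto simp: differentiable_on_eq_differentiable_at[OF U(1)])
  have bl: "bounded_linear (\<lambda>x::'a. x \<bullet> b)" by (rule bounded_linear_inner_left)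
  define g where "g w = G w \<bullet> b" for w
  have g2: "Ck 2 U g" unfolding g_def by (rule Ck_bounded_linear[OF U(1) bl G])
  have "pdy (pdx g) z = pdy (\<lambda>w. pdx G w \<bullet> b) z" "pdx (pdy g) z = pdx (\<lambda>w. pdy G w \<bullet> b) z"
    using pdx_pdy_bounded_linear[OF bl dG(1)] unfolding g_def
    by (auto intro!: pdx_pdy_cong_open[OF U])
  with pdx_pdy_bounded_linear[OF bl dG(2)[OF U(2)]] pdx_pdy_bounded_linear[OF bl dG(3)[OF U(2)]]
  show "pdy (pdx G) z \<bullet> b = pdx (pdy G) z \<bullet> b"
    using pdy_pdx_commute_real[OF U g2] by simp
qed

section \<open>Wirtinger derivatives\<close>

definition Dzb :: "(complex \<Rightarrow> complex^5) \<Rightarrow> complex \<Rightarrow> complex^5" where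
  "Dzb G z = (\<chi> i. (pdx G z $ i + \<i> * pdy G z $ i) / 2)"

definition dz :: "(complex \<Rightarrow> complex) \<Rightarrow> complex \<Rightarrow> complex" where
  "dz g z = (pdx g z - \<i> * pdy g z) / 2"

definition dzb :: "(complex \<Rightarrow> complex) \<Rightarrow> complex \<Rightarrow> complex" where
  "dzb g z = (pdx g z + \<i> * pdy g z) / 2"

lemma Dz_eq: "Dz G z = (1/2) *s pdx G z + (- \<i>/2) *s pdy G z"
  unfolding Dz_def by (simp add: vec_eq_iff field_simps)

lemma Dzb_eq: "Dzb G z = (1/2) *s pdx G z + (\<i>/2) *s pdy G z"
  unfolding Dzb_def by (simp add: vec_eq_iff field_simps)

lemma bounded_linear_vector_scalar_mult: "bounded_linear (\<lambda>v::complex^'n. c *s v)"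
  unfolding linear_conv_bounded_linear[symmetric]
  by (rule linearI) (simp_all add: vec_eq_iff distrib_left)

lemma bounded_bilinear_vector_scalar_mult:
  "bounded_bilinear (\<lambda>(c::complex) (v::complex^'n). c *s v)"
  unfolding bilinear_conv_bounded_bilinear[symmetric] bilinear_def
  by (auto intro!: linearI simp: vec_eq_iff distrib_left distrib_right)

lemma pdx_pdy_lincomb:
  fixes A B :: "complex \<Rightarrow> complex^5"
  assumes "A differentiable (at z)" "B differentiable (at z)"
  shows "pdx (\<lambda>w. a *s A w + b *s B w) z = a *s pdx A z + b *s pdx B z"
    and "pdy (\<lambda>w. a *s A w + b *s B w) z = a *s pdy A z + b *s pdy B z"
proof -
  have "(\<lambda>w. a *s A w) differentiable (at z)" "(\<lambda>w. b *s B w) differentiable (at z)"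
    using assms bounded_linear_imp_differentiable[OF bounded_linear_vector_scalar_mult]
    by (auto intro: differentiable_compose)
  then show "pdx (\<lambda>w. a *s A w + b *s B w) z = a *s pdx A z + b *s pdx B z"
    and "pdy (\<lambda>w. a *s A w + b *s B w) z = a *s pdy A z + b *s pdy B z"
    by (simp_all add: pdx_pdy_add pdx_pdy_bounded_linear[OF bounded_linear_vector_scalar_mult] assms)
qed

lemma Dz_diff:
  assumes "A differentiable (at z)" "B differentiable (at z)"
  shows "Dz (\<lambda>w. A w - B w) z = Dz A z - Dz B z"
  unfolding Dz_def pdx_pdy_diff[OF assms] by (simp add: vec_eq_iff field_simps)

lemma Dz_scalar_mult:
  assumes "c differentiable (at z)" "A differentiable (at z)"
  shows "Dz (\<lambda>w. c w *s A w) z = dz c z *s A z + c z *s Dz A z"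
  using pdx_pdy_bounded_bilinear[OF bounded_bilinear_vector_scalar_mult assms]
  unfolding Dz_def dz_def by (simp add: vec_eq_iff field_simps)

lemma Dzb_Dz_eq_laplacian:
  assumes "open U" "smooth_on U G" "z \<in> U"
  shows "Dzb (Dz G) z = (1/4) *s (pdx (pdx G) z + pdy (pdy G) z)"
    and "Dz (Dzb G) z = Dzb (Dz G) z"
proof -
  have d: "pdx G differentiable (at z)" "pdy G differentiable (at z)"
    using assms smooth_on_differentiable_at smooth_on_pdx smooth_on_pdy by blast+
  have "pdy (pdx G) z = pdx (pdy G) z"
    using pdy_pdx_commute[OF assms(1,3) smooth_on_Ck[OF assms(2)]] .
  then show "Dzb (Dz G) z = (1/4) *s (pdx (pdx G) z + pdy (pdy G) z)"
    and "Dz (Dzb G) z = Dzb (Dz G) z"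
    unfolding Dz_eq[abs_def] Dzb_eq[abs_def] pdx_pdy_lincomb[OF d]
    by (simp_all add: vec_eq_iff field_simps)
qed

lemma Dz_Dzb_cong_open:
  assumes "open U" "z \<in> U" "\<And>w. w \<in> U \<Longrightarrow> G w = G' w"
  shows "Dz G z = Dz G' z" "Dzb G z = Dzb G' z"
  using pdx_pdy_cong_open[OF assms] by (simp_all add: Dz_def Dzb_def)

lemma dz_dzb_cong_open:
  assumes "open U" "z \<in> U" "\<And>w. w \<in> U \<Longrightarrow> g w = g' w"
  shows "dz g z = dz g' z" "dzb g z = dzb g' z"
  using pdx_pdy_cong_open[OF assms] by (simp_all add: dz_def dzb_def)

lemma dz_dzb_eq_0_if_constant_on:
  assumes "open U" "z \<in> U" "\<And>w. w \<in> U \<Longrightarrow> g w = c"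
  shows "dz g z = 0" "dzb g z = 0"
  using dz_dzb_cong_open[OF assms] by (simp_all add: dz_def dzb_def pdx_def pdy_def)

lemma smooth_on_Dz: "open U \<Longrightarrow> smooth_on U G \<Longrightarrow> smooth_on U (Dz G)"
  and smooth_on_Dzb: "open U \<Longrightarrow> smooth_on U G \<Longrightarrow> smooth_on U (Dzb G)"
  unfolding Dz_eq[abs_def] Dzb_eq[abs_def]
  by (intro smooth_on_add smooth_on_bounded_linear[OF _ bounded_linear_vector_scalar_mult]
      smooth_on_pdx smooth_on_pdy; assumption)+

lemma holomorphic_on_iff_dzb_eq_0:
  fixes g :: "complex \<Rightarrow> complex"
  assumes U: "open U" and d: "\<And>z. z \<in> U \<Longrightarrow> g differentiable (at z)"
  shows "g holomorphic_on U \<longleftrightarrow> (\<forall>z\<in>U. dzb g z = 0)"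
  unfolding holomorphic_on_open[OF U]
proof (intro ball_cong refl iffI)
  fix z assume z: "z \<in> U"
  show "dzb g z = 0" if "\<exists>g'. DERIV g z :> g'"
  proof -
    from that obtain c where "(g has_derivative (\<lambda>v. c * v)) (at z)"
      unfolding has_field_derivative_def by blast
    from pdx_pdy_if_has_derivative[OF this] show ?thesis
      by (simp add: dzb_def algebra_simps)
  qed
  show "\<exists>g'. DERIV g z :> g'" if "dzb g z = 0"
  proof -
    from that have "\<i> * (pdx g z + \<i> * pdy g z) = 0"
      by (simp add: dzb_def)
    then have cr: "pdy g z = \<i> * pdx g z"
      by (simp add: algebra_simps)
    have "Re v *\<^sub>R pdx g z + Im v *\<^sub>R pdy g z = pdx g z * v" for v
      by (subst complex_eq[of v]) (simp add: cr scaleR_conv_of_real algebra_simps)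
    then have "(g has_derivative (\<lambda>v. pdx g z * v)) (at z)"
      using has_derivative_pdx_pdy[OF d[OF z]] by simp
    then show ?thesis unfolding has_field_derivative_def by blast
  qed
qed

section \<open>The Lorentzian form\<close>

lemma lorC_sym: "lorC x y = lorC y x"
  unfolding lorC_def by (simp add: mult.commute mult.left_commute)

lemma lorC_add_left: "lorC (x + y) z = lorC x z + lorC y z"
  and lorC_add_right: "lorC z (x + y) = lorC z x + lorC z y"
  and lorC_diff_left: "lorC (x - y) z = lorC x z - lorC y z"
  and lorC_diff_right: "lorC z (x - y) = lorC z x - lorC z y"
  and lorC_scalar_mult_left: "lorC (c *s x) z = c * lorC x z"
  and lorC_scalar_mult_right: "lorC z (c *s x) = c * lorC z x"
  unfolding lorC_def
  by (simp_all add: algebra_simps sum.distrib sum_subtractf sum_distrib_left)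

lemmas lorC_simps = lorC_add_left lorC_add_right lorC_diff_left lorC_diff_right
  lorC_scalar_mult_left lorC_scalar_mult_right

lemma lor_sym: "lor x y = lor y x"
  unfolding lor_def by (simp add: mult.commute mult.left_commute)

lemma lor_add_left: "lor (x + y) z = lor x z + lor y z"
  and lor_add_right: "lor z (x + y) = lor z x + lor z y"
  and lor_diff_left: "lor (x - y) z = lor x z - lor y z"
  and lor_scaleR_left: "lor (r *\<^sub>R x) z = r * lor x z"
  and lor_scaleR_right: "lor z (r *\<^sub>R x) = r * lor z x"
  unfolding lor_def by (simp_all add: algebra_simps sum.distrib sum_subtractf sum_distrib_left)

lemmas lor_simps = lor_add_left lor_add_right lor_diff_left lor_scaleR_left lor_scaleR_right

lemma lorC_cvec: "lorC (cvec x) (cvec y) = complex_of_real (lor x y)"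
  unfolding lorC_def lor_def cvec_def by (simp, rule sum.cong) auto

lemma cvec_add: "cvec (x + y) = cvec x + cvec y"
  and cvec_diff: "cvec (x - y) = cvec x - cvec y"
  and cvec_scaleR: "cvec (r *\<^sub>R x) = complex_of_real r *s cvec x"
  unfolding cvec_def by (simp_all add: vec_eq_iff)

lemma bounded_linear_cvec: "bounded_linear cvec"
  unfolding linear_conv_bounded_linear[symmetric] cvec_def
  by (rule linearI) (simp_all add: vec_eq_iff, simp add: scaleR_conv_of_real)

lemma bounded_bilinear_lorC: "bounded_bilinear lorC"
  unfolding bilinear_conv_bounded_bilinear[symmetric] bilinear_def
  by (auto intro!: linearI simp: lorC_def algebra_simps sum.distrib scaleR_sum_right)

lemma bounded_bilinear_lor: "bounded_bilinear lor"
  unfolding bilinear_conv_bounded_bilinear[symmetric] bilinear_def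
  by (auto intro!: linearI simp: lor_simps)

lemma lorC_axis: "lorC v (axis i 1) = (if i = 4 then -1 else 1) * v $ i"
  unfolding lorC_def axis_def by (simp add: if_distrib[of "\<lambda>x. _ * x"] cong: if_cong)

lemma exhaust_5:
  fixes i :: 5
  shows "i = 1 \<or> i = 2 \<or> i = 3 \<or> i = 4 \<or> i = 5"
proof (induct i)
  case (of_int k)
  then have "k = 0 \<or> k = 1 \<or> k = 2 \<or> k = 3 \<or> k = 4" by fastforce
  then show ?case by auto
qed

lemma lorC_orthogonal_frame_eq_0:
  fixes e1 e2 e3 e4 e5 v :: "complex^5"
  assumes "lorC e1 e2 = 0" "lorC e1 e3 = 0" "lorC e1 e4 = 0" "lorC e1 e5 = 0"
    "lorC e2 e3 = 0" "lorC e2 e4 = 0" "lorC e2 e5 = 0"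
    "lorC e3 e4 = 0" "lorC e3 e5 = 0" "lorC e4 e5 = 0"
    and nonnull: "lorC e1 e1 \<noteq> 0" "lorC e2 e2 \<noteq> 0" "lorC e3 e3 \<noteq> 0"
    "lorC e4 e4 \<noteq> 0" "lorC e5 e5 \<noteq> 0"
    and v: "lorC v e1 = 0" "lorC v e2 = 0" "lorC v e3 = 0" "lorC v e4 = 0" "lorC v e5 = 0"
  shows "v = 0"
proof -
  define T where "T c = c$1 *s e1 + c$2 *s e2 + c$3 *s e3 + c$4 *s e4 + c$5 *s e5" for c :: "complex^5"
  have orth: "lorC e2 e1 = 0" "lorC e3 e1 = 0" "lorC e4 e1 = 0" "lorC e5 e1 = 0"
    "lorC e3 e2 = 0" "lorC e4 e2 = 0" "lorC e5 e2 = 0" "lorC e4 e3 = 0" "lorC e5 e3 = 0"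
    "lorC e5 e4 = 0"
    using assms lorC_sym by metis+
  have coeff: "lorC (T c) e1 = c$1 * lorC e1 e1" "lorC (T c) e2 = c$2 * lorC e2 e2"
    "lorC (T c) e3 = c$3 * lorC e3 e3" "lorC (T c) e4 = c$4 * lorC e4 e4"
    "lorC (T c) e5 = c$5 * lorC e5 e5" for c
    by (simp_all add: T_def lorC_simps orth assms)
  have "inj T"
  proof (rule injI)
    fix c d assume "T c = T d"
    then have "c$1 = d$1" "c$2 = d$2" "c$3 = d$3" "c$4 = d$4" "c$5 = d$5"
      using coeff[of c] coeff[of d] nonnull by (metis mult_cancel_right)+
    then show "c = d" unfolding vec_eq_iff using exhaust_5 by metis
  qed
  moreover have "linear T"
    by (rule linearI) (simp_all add: T_def vec_eq_iff algebra_simps)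
  ultimately have "surj T" using linear_injective_imp_surjective by blast
  have vT: "lorC v (T c) = 0" for c
    by (simp add: T_def lorC_simps v)
  have ax: "(if i = 4 then -1 else 1) * v $ i = 0" for i
  proof -
    obtain c where "axis i 1 = T c" using surjD[OF \<open>surj T\<close>] by blast
    then have "lorC v (axis i 1) = 0" using vT by simp
    then show ?thesis by (simp only: lorC_axis)
  qed
  have "v $ i = 0" for i
    using ax[of i] by (cases "i = 4") simp_all
  then show "v = 0"
    by (simp add: vec_eq_iff)
qed

lemma dz_dzb_lorC:
  assumes "A differentiable (at z)" "B differentiable (at z)"
  shows "dz (\<lambda>w. lorC (A w) (B w)) z = lorC (Dz A z) (B z) + lorC (A z) (Dz B z)"
    and "dzb (\<lambda>w. lorC (A w) (B w)) z = lorC (Dzb A z) (B z) + lorC (A z) (Dzb B z)"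
  unfolding dz_def dzb_def pdx_pdy_bounded_bilinear[OF bounded_bilinear_lorC assms] Dz_eq Dzb_eq
  by (simp_all add: lorC_simps field_simps)

lemma lorC_Dz_Dzb_eq_0_if_constant_on:
  assumes "open U" "z \<in> U" "\<And>w. w \<in> U \<Longrightarrow> lorC (A w) (B w) = c"
    and "A differentiable (at z)" "B differentiable (at z)"
  shows "lorC (Dz A z) (B z) + lorC (A z) (Dz B z) = 0"
    and "lorC (Dzb A z) (B z) + lorC (A z) (Dzb B z) = 0"
  using dz_dzb_eq_0_if_constant_on[OF assms(1-3)] dz_dzb_lorC[OF assms(4,5)] by simp_all

lemma Dz_Dzb_cvec:
  assumes "g differentiable (at z)"
  shows "Dz (\<lambda>w. cvec (g w)) z = (1/2) *s cvec (pdx g z) + (- \<i>/2) *s cvec (pdy g z)"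
    and "Dzb (\<lambda>w. cvec (g w)) z = (1/2) *s cvec (pdx g z) + (\<i>/2) *s cvec (pdy g z)"
  unfolding Dz_eq Dzb_eq pdx_pdy_bounded_linear[OF bounded_linear_cvec assms] by simp_all

lemma lorC_Dz_Dzb_cvec_cvec:
  assumes "g differentiable (at z)"
  shows "lorC (Dz (\<lambda>w. cvec (g w)) z) (cvec v)
           = (of_real (lor (pdx g z) v) - \<i> * of_real (lor (pdy g z) v)) / 2"
    and "lorC (Dzb (\<lambda>w. cvec (g w)) z) (cvec v)
           = (of_real (lor (pdx g z) v) + \<i> * of_real (lor (pdy g z) v)) / 2"
  unfolding Dz_Dzb_cvec[OF assms] by (simp_all add: lorC_simps lorC_cvec field_simps)

lemma Dzb_Dz_cvec:
  assumes "open U" "smooth_on U g" "z \<in> U"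
  shows "Dzb (Dz (\<lambda>w. cvec (g w))) z = cvec ((1/4) *\<^sub>R (pdx (pdx g) z + pdy (pdy g) z))"
proof -
  have d: "g differentiable (at w)" "pdx g differentiable (at w)" "pdy g differentiable (at w)"
    if "w \<in> U" for w
    using assms that smooth_on_differentiable_at smooth_on_pdx smooth_on_pdy by blast+
  have "pdx (pdx (\<lambda>w. cvec (g w))) z = pdx (\<lambda>w. cvec (pdx g w)) z"
    "pdy (pdy (\<lambda>w. cvec (g w))) z = pdy (\<lambda>w. cvec (pdy g w)) z"
    by (rule pdx_pdy_cong_open[OF assms(1,3)], simp add: pdx_pdy_bounded_linear[OF bounded_linear_cvec] d)+
  then have "pdx (pdx (\<lambda>w. cvec (g w))) z = cvec (pdx (pdx g) z)"
    "pdy (pdy (\<lambda>w. cvec (g w))) z = cvec (pdy (pdy g) z)"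
    by (simp_all add: pdx_pdy_bounded_linear[OF bounded_linear_cvec] d assms(3))
  moreover have "smooth_on U (\<lambda>w. cvec (g w))"
    by (rule smooth_on_bounded_linear[OF assms(1) bounded_linear_cvec assms(2)])
  ultimately show ?thesis
    using Dzb_Dz_eq_laplacian(1)[OF assms(1) _ assms(3)] by (simp add: cvec_add cvec_scaleR)
qed

section \<open>Marginally trapped surfaces in de Sitter space\<close>

text \<open>The conformal factor e^{2u} = <f_z, f_zbar> of the paper.\<close>

definition conformal_factor :: "(complex \<Rightarrow> real^5) \<Rightarrow> complex \<Rightarrow> real" where
  "conformal_factor f z = (lor (pdx f z) (pdx f z) + lor (pdy f z) (pdy f z)) / 4"

lemma normal_proj_eq_0_iff:
  assumes "lor N1 N1 = 1" "lor N2 N2 = -1" "lor N1 N2 = 0"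
  shows "normal_proj N1 N2 v = 0 \<longleftrightarrow> lor v N1 = 0 \<and> lor v N2 = 0"
proof
  assume "normal_proj N1 N2 v = 0"
  moreover have "lor (normal_proj N1 N2 v) N1 = lor v N1" "lor (normal_proj N1 N2 v) N2 = lor v N2"
    using assms lor_sym[of N2 N1] by (simp_all add: normal_proj_def lor_simps)
  ultimately show "lor v N1 = 0 \<and> lor v N2 = 0" by (simp add: lor_def)
qed (simp add: normal_proj_def)

locale marginally_trapped_surface =
  fixes U :: "complex set" and f N1 N2 :: "complex \<Rightarrow> real^5" and h :: "complex \<Rightarrow> real"
  assumes open_U: "open U"
    and smooth_f: "smooth_on U f"
    and in_deSitter: "z \<in> U \<Longrightarrow> lor (f z) (f z) = 1"
    and conformal: "z \<in> U \<Longrightarrow> lor (pdx f z) (pdx f z) = lor (pdy f z) (pdy f z)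
                                 \<and> lor (pdx f z) (pdy f z) = 0"
    and spacelike: "z \<in> U \<Longrightarrow> lor (pdx f z) (pdx f z) > 0"
    and normal: "z \<in> U \<Longrightarrow> N \<in> {N1 z, N2 z} \<Longrightarrow>
                   lor N (f z) = 0 \<and> lor N (pdx f z) = 0 \<and> lor N (pdy f z) = 0"
    and orthonormal: "z \<in> U \<Longrightarrow> lor (N1 z) (N1 z) = 1 \<and> lor (N2 z) (N2 z) = -1
                                   \<and> lor (N1 z) (N2 z) = 0"
    and marginally_trapped: "z \<in> U \<Longrightarrow> meanH f z = h z *\<^sub>R (N1 z + N2 z)"
    and h_nonzero: "z \<in> U \<Longrightarrow> h z \<noteq> 0"
begin

text \<open>Fc and Hc are f and H viewed in complex^5, E is e^{2u}, and xi1, xi2 are the paper's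
  \<xi>1 = <f_zz, N1>, \<xi>2 = - <f_zz, N2>.\<close>

definition Fc :: "complex \<Rightarrow> complex^5" where "Fc w = cvec (f w)"
definition Hc :: "complex \<Rightarrow> complex^5" where "Hc w = cvec (meanH f w)"
definition E :: "complex \<Rightarrow> complex" where "E w = complex_of_real (conformal_factor f w)"
definition fzz :: "complex \<Rightarrow> complex^5" where "fzz = Dz (Dz Fc)"
definition xi1 :: "complex \<Rightarrow> complex" where "xi1 w = lorC (fzz w) (cvec (N1 w))"
definition xi2 :: "complex \<Rightarrow> complex" where "xi2 w = - lorC (fzz w) (cvec (N2 w))"

lemma smooth_Fc: "smooth_on U Fc"
  unfolding Fc_def[abs_def] by (rule smooth_on_bounded_linear[OF open_U bounded_linear_cvec smooth_f])

lemma conformal_factor_eq: "z \<in> U \<Longrightarrow> conformal_factor f z = lor (pdx f z) (pdx f z) / 2"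
  using conformal by (simp add: conformal_factor_def)

lemma E_nonzero: "z \<in> U \<Longrightarrow> E z \<noteq> 0"
  using spacelike[of z] conformal_factor_eq[of z] by (simp add: E_def)

lemma meanH_conformal_factor:
  "meanH f = (\<lambda>w. f w + (1 / conformal_factor f w) *\<^sub>R ((1/4) *\<^sub>R (pdx (pdx f) w + pdy (pdy f) w)))"
  by (simp add: fun_eq_iff meanH_def conformal_factor_def)

lemma differentiable_at_U:
  assumes z: "z \<in> U"
  shows "Fc differentiable (at z)" "Dz Fc differentiable (at z)" "Dzb Fc differentiable (at z)"
    "fzz differentiable (at z)" "meanH f differentiable (at z)" "Hc differentiable (at z)"
    "E differentiable (at z)"
proof -
  show "Fc differentiable (at z)" "Dz Fc differentiable (at z)" "Dzb Fc differentiable (at z)"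
    "fzz differentiable (at z)"
    unfolding fzz_def
    by (rule smooth_on_differentiable_at[OF open_U _ z],
        simp add: smooth_Fc smooth_on_Dz smooth_on_Dzb open_U)+
  have df: "f differentiable (at z)" "pdx f differentiable (at z)" "pdy f differentiable (at z)"
    "pdx (pdx f) differentiable (at z)" "pdy (pdy f) differentiable (at z)"
    by (rule smooth_on_differentiable_at[OF open_U _ z],
        simp add: smooth_f smooth_on_pdx smooth_on_pdy)+
  have "(\<lambda>w. lor (pdx f w) (pdx f w)) differentiable (at z)"
    "(\<lambda>w. lor (pdy f w) (pdy f w)) differentiable (at z)"
    using differentiable_bounded_bilinear[OF bounded_bilinear_lor] df by blast+
  then have dc: "conformal_factor f differentiable (at z)"
    unfolding conformal_factor_def[abs_def] by simp
  then show "E differentiable (at z)"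
    unfolding E_def[abs_def]
    by (rule differentiable_compose[OF bounded_linear_imp_differentiable[OF bounded_linear_of_real]])
  have "conformal_factor f z \<noteq> 0"
    using spacelike[OF z] conformal_factor_eq[OF z] by simp
  with df dc show dH: "meanH f differentiable (at z)"
    unfolding meanH_conformal_factor by simp
  then show "Hc differentiable (at z)"
    unfolding Hc_def[abs_def]
    by (rule differentiable_compose[OF bounded_linear_imp_differentiable[OF bounded_linear_cvec]])
qed

lemma Dz_Dzb_Fc:
  assumes "z \<in> U"
  shows "Dz Fc z = (1/2) *s cvec (pdx f z) + (- \<i>/2) *s cvec (pdy f z)"
    and "Dzb Fc z = (1/2) *s cvec (pdx f z) + (\<i>/2) *s cvec (pdy f z)"
  using Dz_Dzb_cvec smooth_on_differentiable_at[OF open_U smooth_f assms]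
  unfolding Fc_def[abs_def] by blast+

lemma lorC_Fc_Fc: "z \<in> U \<Longrightarrow> lorC (Fc z) (Fc z) = 1"
  by (simp add: Fc_def lorC_cvec in_deSitter)

lemma lorC_Fc_Dz_Fc:
  assumes "z \<in> U"
  shows "lorC (Fc z) (Dz Fc z) = 0"
proof -
  have "lorC (Dz Fc z) (Fc z) + lorC (Fc z) (Dz Fc z) = 0"
    by (rule lorC_Dz_Dzb_eq_0_if_constant_on(1)[OF open_U assms lorC_Fc_Fc
          differentiable_at_U(1)[OF assms] differentiable_at_U(1)[OF assms]])
  then show ?thesis by (simp add: lorC_sym[of "Dz Fc z"])
qed

lemma f_orthogonal_pdx_pdy:
  assumes "z \<in> U"
  shows "lor (f z) (pdx f z) = 0" "lor (f z) (pdy f z) = 0"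
proof -
  have "lorC (Dz Fc z) (cvec (f z)) = 0"
    using lorC_Fc_Dz_Fc[OF assms] by (simp add: Fc_def lorC_sym)
  then have "(of_real (lor (pdx f z) (f z)) - \<i> * of_real (lor (pdy f z) (f z))) / 2 = 0"
    using lorC_Dz_Dzb_cvec_cvec(1) smooth_on_differentiable_at[OF open_U smooth_f assms]
    unfolding Fc_def[abs_def] by metis
  then show "lor (f z) (pdx f z) = 0" "lor (f z) (pdy f z) = 0"
    by (simp_all add: complex_eq_iff lor_sym)
qed

lemma lorC_Dz_Fc_Dz_Fc: "z \<in> U \<Longrightarrow> lorC (Dz Fc z) (Dz Fc z) = 0"
  and lorC_Dz_Fc_Dzb_Fc: "z \<in> U \<Longrightarrow> lorC (Dz Fc z) (Dzb Fc z) = E z"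
  using conformal[of z] lor_sym[of "pdy f z" "pdx f z"]
  by (simp_all add: Dz_Dzb_Fc lorC_simps lorC_cvec E_def conformal_factor_def field_simps)

lemma lorC_N_tangent:
  assumes "z \<in> U" "N \<in> {N1 z, N2 z}"
  shows "lorC (cvec N) (Fc z) = 0" "lorC (cvec N) (Dz Fc z) = 0" "lorC (cvec N) (Dzb Fc z) = 0"
  using normal[OF assms]
  by (simp_all add: Fc_def Dz_Dzb_Fc[OF assms(1)] lorC_simps lorC_cvec)

lemma Hc_eq: "z \<in> U \<Longrightarrow> Hc z = complex_of_real (h z) *s (cvec (N1 z) + cvec (N2 z))"
  by (simp add: Hc_def marginally_trapped cvec_add cvec_scaleR)

lemma lorC_Hc:
  assumes "z \<in> U"
  shows "lorC (Hc z) (Hc z) = 0" "lorC (Hc z) (Fc z) = 0" "lorC (Hc z) (Dz Fc z) = 0"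
  using orthonormal[OF assms] lorC_N_tangent[OF assms] lor_sym[of "N2 z" "N1 z"]
  by (simp_all add: Hc_eq[OF assms] lorC_simps lorC_cvec lorC_sym[of "cvec _" "Fc z"]
      lorC_sym[of "cvec _" "Dz Fc z"])

lemma Dzb_Dz_Fc:
  assumes "z \<in> U"
  shows "Dzb (Dz Fc) z = E z *s (Hc z - Fc z)"
proof -
  let ?L = "(1/4) *\<^sub>R (pdx (pdx f) z + pdy (pdy f) z)"
  have "conformal_factor f z \<noteq> 0"
    using spacelike[OF assms] conformal_factor_eq[OF assms] by simp
  then have "?L = conformal_factor f z *\<^sub>R (meanH f z - f z)"
    by (simp add: meanH_conformal_factor)
  moreover have "Dzb (Dz Fc) z = cvec ?L"
    unfolding Fc_def[abs_def] by (rule Dzb_Dz_cvec[OF open_U smooth_f assms])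
  ultimately show ?thesis
    by (simp add: E_def Hc_def Fc_def cvec_scaleR cvec_diff)
qed

lemma lorC_Fc_fzz:
  assumes "z \<in> U"
  shows "lorC (Fc z) (fzz z) = 0"
  using lorC_Dz_Dzb_eq_0_if_constant_on(1)[OF open_U assms lorC_Fc_Dz_Fc
      differentiable_at_U(1,2)[OF assms]]
  by (simp add: lorC_Dz_Fc_Dz_Fc[OF assms] fzz_def)

lemma lorC_Dz_Fc_fzz:
  assumes "z \<in> U"
  shows "lorC (Dz Fc z) (fzz z) = 0"
  using lorC_Dz_Dzb_eq_0_if_constant_on(1)[OF open_U assms lorC_Dz_Fc_Dz_Fc
      differentiable_at_U(2,2)[OF assms]]
  by (simp add: fzz_def lorC_sym[of "Dz (Dz Fc) z"])

lemma lorC_fzz_Dzb_Fc: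
  assumes "z \<in> U"
  shows "lorC (fzz z) (Dzb Fc z) = dz E z"
proof -
  have "dz (\<lambda>w. lorC (Dz Fc w) (Dzb Fc w)) z = dz E z"
    by (rule dz_dzb_cong_open(1)[OF open_U assms lorC_Dz_Fc_Dzb_Fc])
  moreover have "Dz (Dzb Fc) z = E z *s (Hc z - Fc z)"
    using Dzb_Dz_eq_laplacian(2)[OF open_U smooth_Fc assms] Dzb_Dz_Fc[OF assms] by simp
  ultimately show ?thesis
    using lorC_Hc(3)[OF assms] lorC_Fc_Dz_Fc[OF assms]
    by (simp add: dz_dzb_lorC(1)[OF differentiable_at_U(2,3)[OF assms]] fzz_def lorC_simps
        lorC_sym[of "Dz Fc z"])
qed

lemma eq_0_if_orthogonal_to_frame:
  assumes z: "z \<in> U"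
    and v: "lorC v (Fc z) = 0" "lorC v (Dz Fc z) = 0" "lorC v (Dzb Fc z) = 0"
      "lorC v (cvec (N1 z)) = 0" "lorC v (cvec (N2 z)) = 0"
  shows "v = 0"
proof (rule lorC_orthogonal_frame_eq_0[of "Fc z" "cvec (pdx f z)" "cvec (pdy f z)" "cvec (N1 z)"
      "cvec (N2 z)"])
  show "lorC v (cvec (pdx f z)) = 0" "lorC v (cvec (pdy f z)) = 0"
    using v(2,3) by (simp_all add: Dz_Dzb_Fc[OF z] lorC_simps)
  have nf: "lor (f z) N = 0" "lor (pdx f z) N = 0" "lor (pdy f z) N = 0"
    if "N \<in> {N1 z, N2 z}" for N
    using normal[OF z that] lor_sym by metis+
  from spacelike[OF z] conformal[OF z] f_orthogonal_pdx_pdy[OF z] orthonormal[OF z] in_deSitter[OF z]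
  show "lorC (Fc z) (cvec (pdx f z)) = 0" "lorC (Fc z) (cvec (pdy f z)) = 0"
    "lorC (Fc z) (cvec (N1 z)) = 0" "lorC (Fc z) (cvec (N2 z)) = 0"
    "lorC (cvec (pdx f z)) (cvec (pdy f z)) = 0" "lorC (cvec (pdx f z)) (cvec (N1 z)) = 0"
    "lorC (cvec (pdx f z)) (cvec (N2 z)) = 0" "lorC (cvec (pdy f z)) (cvec (N1 z)) = 0"
    "lorC (cvec (pdy f z)) (cvec (N2 z)) = 0" "lorC (cvec (N1 z)) (cvec (N2 z)) = 0"
    "lorC (Fc z) (Fc z) \<noteq> 0" "lorC (cvec (pdx f z)) (cvec (pdx f z)) \<noteq> 0"
    "lorC (cvec (pdy f z)) (cvec (pdy f z)) \<noteq> 0" "lorC (cvec (N1 z)) (cvec (N1 z)) \<noteq> 0"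
    "lorC (cvec (N2 z)) (cvec (N2 z)) \<noteq> 0"
    by (simp_all add: Fc_def lorC_cvec nf)
qed (fact v)+

text \<open>The coefficients are read off by pairing with the frame f, f_z, f_zbar, N1, N2, using
  <f_zz, f> = <f_zz, f_z> = 0 and <f_zz, f_zbar> = E_z.\<close>

lemma gauss_formula:
  assumes z: "z \<in> U"
  shows "fzz z = (dz E z / E z) *s Dz Fc z + xi1 z *s cvec (N1 z) + xi2 z *s cvec (N2 z)"
proof -
  let ?v = "fzz z - ((dz E z / E z) *s Dz Fc z + xi1 z *s cvec (N1 z) + xi2 z *s cvec (N2 z))"
  have N: "lorC (cvec (N1 z)) (cvec (N1 z)) = 1" "lorC (cvec (N2 z)) (cvec (N2 z)) = -1"
    "lorC (cvec (N2 z)) (cvec (N1 z)) = 0" "lorC (cvec (N1 z)) (cvec (N2 z)) = 0"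
    using orthonormal[OF z] lor_sym[of "N2 z" "N1 z"] by (simp_all add: lorC_cvec)
  have T: "lorC (Dz Fc z) (cvec N) = 0" if "N \<in> {N1 z, N2 z}" for N
    using lorC_N_tangent(2)[OF z that] by (simp add: lorC_sym)
  have "lorC (fzz z) (Fc z) = 0" "lorC (Dz Fc z) (Fc z) = 0" "lorC (fzz z) (Dz Fc z) = 0"
    using lorC_Fc_fzz[OF z] lorC_Fc_Dz_Fc[OF z] lorC_Dz_Fc_fzz[OF z] by (simp_all add: lorC_sym)
  with lorC_N_tangent[OF z] lorC_Dz_Fc_Dz_Fc[OF z] lorC_fzz_Dzb_Fc[OF z] lorC_Dz_Fc_Dzb_Fc[OF z]
    E_nonzero[OF z] N T
  have "lorC ?v (Fc z) = 0" "lorC ?v (Dz Fc z) = 0" "lorC ?v (Dzb Fc z) = 0"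
    "lorC ?v (cvec (N1 z)) = 0" "lorC ?v (cvec (N2 z)) = 0"
    by (simp_all add: lorC_simps xi1_def xi2_def)
  then have "?v = 0" by (rule eq_0_if_orthogonal_to_frame[OF z])
  then show ?thesis by simp
qed

lemma lorC_Dz_Hc_Dz_Fc:
  assumes "z \<in> U"
  shows "lorC (Dz Hc z) (Dz Fc z) = - lorC (Hc z) (fzz z)"
  using lorC_Dz_Dzb_eq_0_if_constant_on(1)[OF open_U assms lorC_Hc(3) differentiable_at_U(6,2)[OF assms]]
  by (simp add: fzz_def eq_neg_iff_add_eq_0)

lemma lorC_Dz_Dzb_Hc_Hc:
  assumes "z \<in> U"
  shows "lorC (Dz Hc z) (Hc z) = 0" "lorC (Dzb Hc z) (Hc z) = 0"
  using lorC_Dz_Dzb_eq_0_if_constant_on[OF open_U assms lorC_Hc(1) differentiable_at_U(6,6)[OF assms]]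
  by (simp_all add: lorC_sym[of "Hc z"])

lemma lorC_Dzb_Hc_Dz_Fc:
  assumes "z \<in> U"
  shows "lorC (Dzb Hc z) (Dz Fc z) = 0"
  using lorC_Dz_Dzb_eq_0_if_constant_on(2)[OF open_U assms lorC_Hc(3) differentiable_at_U(6,2)[OF assms]]
    lorC_Hc[OF assms]
  by (simp add: Dzb_Dz_Fc[OF assms] lorC_simps)

text \<open>Differentiate <H, H> = 0, with H = h (N1 + N2) and h \<noteq> 0.\<close>

lemma lorC_Dz_Dzb_Hc_N2:
  assumes "z \<in> U"
  shows "lorC (Dz Hc z) (cvec (N2 z)) = - lorC (Dz Hc z) (cvec (N1 z))"
    and "lorC (Dzb Hc z) (cvec (N2 z)) = - lorC (Dzb Hc z) (cvec (N1 z))"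
  using lorC_Dz_Dzb_Hc_Hc[OF assms] h_nonzero[OF assms]
  by (simp_all add: Hc_eq[OF assms] lorC_simps eq_neg_iff_add_eq_0 add.commute flip: distrib_left)

lemma Dzb_fzz:
  assumes "z \<in> U"
  shows "Dzb fzz z = dz E z *s (Hc z - Fc z) + E z *s (Dz Hc z - Dz Fc z)"
proof -
  have "smooth_on U (Dz Fc)" by (rule smooth_on_Dz[OF open_U smooth_Fc])
  then have "Dzb fzz z = Dz (Dzb (Dz Fc)) z"
    unfolding fzz_def by (rule Dzb_Dz_eq_laplacian(2)[OF open_U _ assms, symmetric])
  also have "\<dots> = Dz (\<lambda>w. E w *s (Hc w - Fc w)) z"
    by (rule Dz_Dzb_cong_open(1)[OF open_U assms Dzb_Dz_Fc])
  also have "\<dots> = dz E z *s (Hc z - Fc z) + E z *s (Dz Hc z - Dz Fc z)"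
    using differentiable_at_U[OF assms]
    by (simp only: Dz_scalar_mult Dz_diff differentiable_diff)
  finally show ?thesis .
qed

lemma lorC_fzz_fzz:
  assumes "z \<in> U"
  shows "lorC (fzz z) (fzz z) = (xi1 z + xi2 z) * (xi1 z - xi2 z)"
proof -
  have "lorC (fzz z) (Dz Fc z) = 0"
    using lorC_Dz_Fc_fzz[OF assms] by (simp add: lorC_sym)
  then have "lorC (fzz z) ((dz E z / E z) *s Dz Fc z + xi1 z *s cvec (N1 z) + xi2 z *s cvec (N2 z))
      = (xi1 z + xi2 z) * (xi1 z - xi2 z)"
    by (simp add: lorC_simps xi1_def xi2_def algebra_simps)
  then show ?thesis by (simp flip: gauss_formula[OF assms])
qed

lemma lorC_fzz_Hc: "z \<in> U \<Longrightarrow> lorC (fzz z) (Hc z) = complex_of_real (h z) * (xi1 z - xi2 z)"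
  by (simp add: Hc_eq lorC_simps xi1_def xi2_def algebra_simps)

lemma dzb_lorC_fzz_fzz:
  assumes z: "z \<in> U"
  shows "dzb (\<lambda>w. lorC (fzz w) (fzz w)) z
           = 2 * E z * lorC (Dz Hc z) (cvec (N1 z)) * (xi1 z - xi2 z)"
proof -
  let ?\<delta> = "lorC (Hc z) (fzz z)" and ?a = "lorC (Dz Hc z) (cvec (N1 z))"
  have Hz: "lorC (Dz Hc z) (fzz z) = - (dz E z / E z) * ?\<delta> + ?a * (xi1 z - xi2 z)"
    using lorC_Dz_Hc_Dz_Fc[OF z] lorC_Dz_Dzb_Hc_N2(1)[OF z]
    by (subst gauss_formula[OF z]) (simp add: lorC_simps algebra_simps)
  have "dzb (\<lambda>w. lorC (fzz w) (fzz w)) z = 2 * lorC (Dzb fzz z) (fzz z)"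
    by (simp add: dz_dzb_lorC(2)[OF differentiable_at_U(4,4)[OF z]] lorC_sym[of "fzz z"])
  also have "\<dots> = 2 * (dz E z * ?\<delta> + E z * lorC (Dz Hc z) (fzz z))"
    using lorC_Fc_fzz[OF z] lorC_Dz_Fc_fzz[OF z] by (simp add: Dzb_fzz[OF z] lorC_simps)
  also have "\<dots> = 2 * E z * ?a * (xi1 z - xi2 z)"
    unfolding Hz using E_nonzero[OF z] by (simp add: field_simps)
  finally show ?thesis .
qed

lemma dzb_lorC_fzz_Hc:
  assumes z: "z \<in> U"
  shows "dzb (\<lambda>w. lorC (fzz w) (Hc w)) z = lorC (Dzb Hc z) (cvec (N1 z)) * (xi1 z - xi2 z)"
proof -
  have "lorC (Dzb fzz z) (Hc z) = 0"
    using lorC_Hc[OF z] lorC_Dz_Dzb_Hc_Hc[OF z]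
    by (simp add: Dzb_fzz[OF z] lorC_simps lorC_sym[of "Fc z"] lorC_sym[of "Dz Fc z"])
  moreover have "lorC (fzz z) (Dzb Hc z) = lorC (Dzb Hc z) (cvec (N1 z)) * (xi1 z - xi2 z)"
    using lorC_Dzb_Hc_Dz_Fc[OF z] lorC_Dz_Dzb_Hc_N2(2)[OF z]
    by (subst gauss_formula[OF z])
      (simp add: lorC_simps lorC_sym[of "Dz Fc z"] lorC_sym[of "cvec _"] algebra_simps)
  ultimately show ?thesis
    by (simp add: dz_dzb_lorC(2)[OF differentiable_at_U(4,6)[OF z]])
qed

lemma lorC_Dz_Dzb_Hc_N1_eq_0_iff:
  assumes "z \<in> U"
  shows "lorC (Dz Hc z) (cvec (N1 z)) = 0 \<longleftrightarrow>
           lor (pdx (meanH f) z) (N1 z) = 0 \<and> lor (pdy (meanH f) z) (N1 z) = 0"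
    and "lorC (Dzb Hc z) (cvec (N1 z)) = 0 \<longleftrightarrow>
           lor (pdx (meanH f) z) (N1 z) = 0 \<and> lor (pdy (meanH f) z) (N1 z) = 0"
  unfolding Hc_def[abs_def] lorC_Dz_Dzb_cvec_cvec[OF differentiable_at_U(5)[OF assms]]
  by (simp_all add: complex_eq_iff)

lemma normal_derivative_meanH_eq_0_iff:
  assumes z: "z \<in> U"
  shows "nabla_perp_x N1 N2 (meanH f) z = 0 \<and> nabla_perp_y N1 N2 (meanH f) z = 0 \<longleftrightarrow>
           lor (pdx (meanH f) z) (N1 z) = 0 \<and> lor (pdy (meanH f) z) (N1 z) = 0"
proof -
  have "(of_real (lor (pdx (meanH f) z) (N2 z)) - \<i> * of_real (lor (pdy (meanH f) z) (N2 z))) / 2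
      = - ((of_real (lor (pdx (meanH f) z) (N1 z)) - \<i> * of_real (lor (pdy (meanH f) z) (N1 z))) / 2)"
    using lorC_Dz_Dzb_Hc_N2(1)[OF z] lorC_Dz_Dzb_cvec_cvec(1)[OF differentiable_at_U(5)[OF z]]
    unfolding Hc_def[abs_def] by metis
  then have "lor (pdx (meanH f) z) (N2 z) = - lor (pdx (meanH f) z) (N1 z)"
    "lor (pdy (meanH f) z) (N2 z) = - lor (pdy (meanH f) z) (N1 z)"
    by (simp_all add: complex_eq_iff)
  with orthonormal[OF z] show ?thesis
    unfolding nabla_perp_x_def nabla_perp_y_def by (simp add: normal_proj_eq_0_iff)
qed

lemma quartic_holomorphic_iff_parallel:
  assumes "\<And>z. z \<in> U \<Longrightarrow> xi1 z \<noteq> xi2 z"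
  shows "(\<lambda>z. lorC (fzz z) (fzz z)) holomorphic_on U \<longleftrightarrow>
           (\<forall>z\<in>U. nabla_perp_x N1 N2 (meanH f) z = 0 \<and> nabla_perp_y N1 N2 (meanH f) z = 0)"
proof -
  have "(\<lambda>z. lorC (fzz z) (fzz z)) holomorphic_on U \<longleftrightarrow>
      (\<forall>z\<in>U. dzb (\<lambda>w. lorC (fzz w) (fzz w)) z = 0)"
    using differentiable_bounded_bilinear[OF bounded_bilinear_lorC differentiable_at_U(4,4)]
    by (rule holomorphic_on_iff_dzb_eq_0[OF open_U])
  also have "\<dots> \<longleftrightarrow> (\<forall>z\<in>U. lorC (Dz Hc z) (cvec (N1 z)) = 0)"
    using dzb_lorC_fzz_fzz E_nonzero assms by auto
  finally show ?thesis
    using lorC_Dz_Dzb_Hc_N1_eq_0_iff(1) normal_derivative_meanH_eq_0_iff by auto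
qed

lemma delta_holomorphic_iff_parallel:
  assumes "\<And>z. z \<in> U \<Longrightarrow> xi1 z \<noteq> xi2 z"
  shows "(\<lambda>z. complex_of_real (h z) * (xi1 z - xi2 z)) holomorphic_on U \<longleftrightarrow>
           (\<forall>z\<in>U. nabla_perp_x N1 N2 (meanH f) z = 0 \<and> nabla_perp_y N1 N2 (meanH f) z = 0)"
proof -
  have "(\<lambda>z. complex_of_real (h z) * (xi1 z - xi2 z)) holomorphic_on U \<longleftrightarrow>
      (\<lambda>z. lorC (fzz z) (Hc z)) holomorphic_on U"
    by (rule holomorphic_cong) (simp_all add: lorC_fzz_Hc)
  also have "\<dots> \<longleftrightarrow> (\<forall>z\<in>U. dzb (\<lambda>w. lorC (fzz w) (Hc w)) z = 0)"
    using differentiable_bounded_bilinear[OF bounded_bilinear_lorC differentiable_at_U(4,6)]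
    by (rule holomorphic_on_iff_dzb_eq_0[OF open_U])
  also have "\<dots> \<longleftrightarrow> (\<forall>z\<in>U. lorC (Dzb Hc z) (cvec (N1 z)) = 0)"
    using dzb_lorC_fzz_Hc assms by auto
  finally show ?thesis
    using lorC_Dz_Dzb_Hc_N1_eq_0_iff(2) normal_derivative_meanH_eq_0_iff by auto
qed

end

theorem mainTheorem8:
  fixes U :: "complex set"
    and f N1 N2 :: "complex \<Rightarrow> real^5"
    and h :: "complex \<Rightarrow> real"
  assumes U_open: "open U"
    and f_smooth: "smooth_on U f" and N1_smooth: "smooth_on U N1" and N2_smooth: "smooth_on U N2"
    and in_deSitter: "\<forall>z\<in>U. lor (f z) (f z) = 1"
    and conformal: "\<forall>z\<in>U. lor (pdx f z) (pdx f z) = lor (pdy f z) (pdy f z)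
                          \<and> lor (pdx f z) (pdy f z) = 0"
    and spacelike_immersion: "\<forall>z\<in>U. lor (pdx f z) (pdx f z) > 0"
    and N_normal: "\<forall>z\<in>U. \<forall>N\<in>{N1 z, N2 z}.
                      lor N (f z) = 0 \<and> lor N (pdx f z) = 0 \<and> lor N (pdy f z) = 0"
    and N_orthonormal: "\<forall>z\<in>U. lor (N1 z) (N1 z) = 1 \<and> lor (N2 z) (N2 z) = -1
                          \<and> lor (N1 z) (N2 z) = 0"
    and N2_future: "\<forall>z\<in>U. lor (N2 z) (axis 4 1) < 0"
    and marginally_trapped: "\<forall>z\<in>U. meanH f z = h z *\<^sub>R (N1 z + N2 z)"
    and H_nonzero: "\<forall>z\<in>U. h z \<noteq> 0"
    and non_isotropic: "\<forall>z\<in>U. lorC (Dz (Dz (cvec \<circ> f)) z) (Dz (Dz (cvec \<circ> f)) z) \<noteq> 0"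
  shows "((\<lambda>z. lorC (Dz (Dz (cvec \<circ> f)) z) (Dz (Dz (cvec \<circ> f)) z)) holomorphic_on U
          \<longleftrightarrow> (\<lambda>z. complex_of_real (h z) *
                    (lorC (Dz (Dz (cvec \<circ> f)) z) (cvec (N1 z))
                     - (- lorC (Dz (Dz (cvec \<circ> f)) z) (cvec (N2 z))))) holomorphic_on U)
       \<and> ((\<lambda>z. complex_of_real (h z) *
                    (lorC (Dz (Dz (cvec \<circ> f)) z) (cvec (N1 z))
                     - (- lorC (Dz (Dz (cvec \<circ> f)) z) (cvec (N2 z))))) holomorphic_on U
          \<longleftrightarrow> (\<forall>z\<in>U. nabla_perp_x N1 N2 (meanH f) z = 0 \<and> nabla_perp_y N1 N2 (meanH f) z = 0))"
proof -
  interpret S: marginally_trapped_surface U f N1 N2 h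
    using assms by unfold_locales auto
  have fzz_eq: "Dz (Dz (cvec \<circ> f)) = S.fzz"
    unfolding S.fzz_def S.Fc_def[abs_def] comp_def ..
  have "S.xi1 z \<noteq> S.xi2 z" if "z \<in> U" for z
    using non_isotropic S.lorC_fzz_fzz[OF that] that by (auto simp: fzz_eq)
  then show ?thesis
    using S.quartic_holomorphic_iff_parallel S.delta_holomorphic_iff_parallel
    unfolding fzz_eq S.xi1_def[symmetric] S.xi2_def[symmetric] by blast
qed

end
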